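(* Let $N\ge1$, $\sigma^2>0$, $P_S,P_R>0$, and for each $n=1,\dots,N$ let $\gamma_n^{sr}>0$, $\gamma_n^{rm}>0$, $\gamma_n^{re}>0$ with $\gamma_n^{rm}>\gamma_n^{re}$. Consider the problem $\mathcal{P}1$ in the variables $(P_n^s,P_n^r,t_n)_{n=1}^N$: maximize $\sum_{n=1}^N \frac12\log_2\!\Big(\frac{1+t_n}{1+P_n^r\gamma_n^{re}/\sigma^2}\Big)$ subject to $t_n\le P_n^s\gamma_n^{sr}/\sigma^2$ for all $n$; $t_n\le P_n^r\gamma_n^{rm}/\sigma^2$ for all $n$; $\sum_n P_n^s\le P_S$; $\sum_n P_n^r\le P_R$; $P_n^s\ge0$, $P_n^r\ge0$ for all $n$; and $P_n^r\gamma_n^{re}\le P_n^s\gamma_n^{sr}$ for all $n$. Then the maximum secure rate is achieved with the source and relay powers on each subcarrier satisfying $$P_n^s\gamma_n^{sr}=P_n^r\gamma_n^{rm},$$ i.e. $\mathcal{P}1$ has a global optimal solution in which this equality holds for every $n=1,\dots,N$.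
   Context: Problem $\mathcal{P}1$ is the power-allocation problem for sum secure rate maximization in an OFDMA downlink with a source, a half-duplex decode-and-forward relay, and mutually untrusted users, after each subcarrier $n$ has been assigned to the user with the best relay-to-user gain $\gamma_n^{rm}$; $\gamma_n^{re}$ is the largest relay-to-user gain among the other users (the equivalent eavesdropper), $\gamma_n^{sr}$ is the source-to-relay gain, $P_n^s,P_n^r$ are the source and relay powers on subcarrier $n$, and $t_n$ is an auxiliary variable representing $\min(P_n^s\gamma_n^{sr},P_n^r\gamma_n^{rm})/\sigma^2$. The secure rate on subcarrier $n$ is $\frac12\log_2\big((1+\min(P_n^s\gamma_n^{sr},P_n^r\gamma_n^{rm})/\sigma^2)/(1+P_n^r\gamma_n^{re}/\sigma^2)\big)$. *)

theory Defs
  imports "HOL-Analysis.Analysis"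
begin

text \<open>Subcarriers are indexed by n in {..<N} (i.e. 0,...,N-1).
  gsr, grm, gre : channel gains; sigma2 : noise power; PS, PR : power budgets.\<close>

definition P1_objective ::
  "nat \<Rightarrow> real \<Rightarrow> (nat \<Rightarrow> real) \<Rightarrow> (nat \<Rightarrow> real) \<Rightarrow> (nat \<Rightarrow> real) \<Rightarrow> real" where
  "P1_objective N sigma2 gre pr t =
     (\<Sum>n<N. (1/2) * log 2 ((1 + t n) / (1 + pr n * gre n / sigma2)))"

text \<open>Feasible set of problem P1. The condition 1 + t n > 0 is the natural domain
  of the logarithm in the objective (t n stands for a nonnegative SNR).\<close>
definition P1_feasible ::
  "nat \<Rightarrow> real \<Rightarrow> real \<Rightarrow> real \<Rightarrow> (nat \<Rightarrow> real) \<Rightarrow> (nat \<Rightarrow> real) \<Rightarrow> (nat \<Rightarrow> real)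
   \<Rightarrow> (nat \<Rightarrow> real) \<Rightarrow> (nat \<Rightarrow> real) \<Rightarrow> (nat \<Rightarrow> real) \<Rightarrow> bool" where
  "P1_feasible N sigma2 PS PR gsr grm gre ps pr t \<longleftrightarrow>
     (\<forall>n<N. 1 + t n > 0) \<and>
     (\<forall>n<N. t n \<le> ps n * gsr n / sigma2) \<and>
     (\<forall>n<N. t n \<le> pr n * grm n / sigma2) \<and>
     (\<Sum>n<N. ps n) \<le> PS \<and>
     (\<Sum>n<N. pr n) \<le> PR \<and>
     (\<forall>n<N. ps n \<ge> 0 \<and> pr n \<ge> 0) \<and>
     (\<forall>n<N. pr n * gre n \<le> ps n * gsr n)"

end

theory Submission imports Defs begin

text \<open>On each subcarrier the secure rate depends on the source power only through
  the bottleneck min(P_s g_sr, P_r g_rm), and extra relay power only helps the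
  eavesdropper. Hence any feasible point is dominated by the balanced point that
  spends source power min(P_s, P_r g_rm / g_sr) and the matching relay power,
  and the problem reduces to maximizing a continuous function of the source
  powers alone over a compact set, where a maximum exists.\<close>

lemma secrecy_ratio_le_balanced:
  fixes s gsr grm gre t m pr :: real
  assumes "s > 0" "gsr > 0" "grm > 0" "gre > 0" "m \<ge> 0" "1 + t > 0"
    and "t \<le> m * gsr / s" and "m * gsr / grm \<le> pr"
  shows "(1 + t) / (1 + pr * gre / s) \<le> (1 + m * gsr / s) / (1 + m * gsr / grm * gre / s)"
proof -
  have "m * gsr / grm * gre / s \<le> pr * gre / s"
    using assms by (intro divide_right_mono mult_right_mono) auto
  moreover have "0 < 1 + m * gsr / grm * gre / s"
    using assms by (simp add: add_pos_nonneg)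
  ultimately show ?thesis
    using assms by (intro frac_le) auto
qed

definition balanced_rate ::
  "nat \<Rightarrow> real \<Rightarrow> (nat \<Rightarrow> real) \<Rightarrow> (nat \<Rightarrow> real) \<Rightarrow> (nat \<Rightarrow> real) \<Rightarrow> (nat \<Rightarrow> real) \<Rightarrow> real" where
  "balanced_rate N sigma2 gsr grm gre ps =
     P1_objective N sigma2 gre (\<lambda>n. ps n * gsr n / grm n) (\<lambda>n. ps n * gsr n / sigma2)"

text \<open>Source powers vanish off the subcarriers {..<N}, so that the set is compact.\<close>
definition balanced_powers ::
  "nat \<Rightarrow> real \<Rightarrow> real \<Rightarrow> (nat \<Rightarrow> real) \<Rightarrow> (nat \<Rightarrow> real) \<Rightarrow> (nat \<Rightarrow> real) set" where
  "balanced_powers N PS PR gsr grm =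
     Pi UNIV (\<lambda>n. if n < N then {0..PS} else {0})
     \<inter> {ps. (\<Sum>n<N. ps n) \<le> PS}
     \<inter> {ps. (\<Sum>n<N. ps n * (gsr n / grm n)) \<le> PR}"

lemma compact_balanced_powers: "compact (balanced_powers N PS PR gsr grm)"
proof -
  have "compactin (product_topology (\<lambda>_. euclideanreal) UNIV)
          (PiE UNIV (\<lambda>n. if n < N then {0..PS} else {0::real}))"
    by (subst compactin_PiE) auto
  then have "compact (Pi UNIV (\<lambda>n. if n < N then {0..PS} else {0::real}))"
    by (simp add: euclidean_product_topology PiE_UNIV_domain)
  moreover have "closed {ps::nat \<Rightarrow> real. (\<Sum>n<N. ps n) \<le> PS}"
    by (intro closed_Collect_le continuous_on_sum continuous_on_const)
      (auto intro: continuous_on_product_coordinates)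
  moreover have "closed {ps::nat \<Rightarrow> real. (\<Sum>n<N. ps n * (gsr n / grm n)) \<le> PR}"
    by (intro closed_Collect_le continuous_on_sum continuous_on_const continuous_intros)
      (auto intro: continuous_on_product_coordinates)
  ultimately show ?thesis
    unfolding balanced_powers_def by (intro compact_Int_closed closed_Int)
qed

lemma balanced_powers_nonneg:
  "ps \<in> balanced_powers N PS PR gsr grm \<Longrightarrow> n < N \<Longrightarrow> ps n \<ge> 0"
  unfolding balanced_powers_def by (auto simp: Pi_iff split: if_splits)

lemma continuous_on_balanced_rate:
  assumes "sigma2 > 0"
    and "\<And>n. n < N \<Longrightarrow> gsr n > 0" "\<And>n. n < N \<Longrightarrow> grm n > 0" "\<And>n. n < N \<Longrightarrow> gre n > 0"
  shows "continuous_on (balanced_powers N PS PR gsr grm) (balanced_rate N sigma2 gsr grm gre)"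
proof -
  have pos: "0 < 1 + ps n * gsr n / sigma2 \<and> 0 < 1 + ps n * gsr n / grm n * gre n / sigma2"
    if "ps \<in> balanced_powers N PS PR gsr grm" "n < N" for ps n
  proof -
    have "ps n \<ge> 0" "gsr n > 0" "grm n > 0" "gre n > 0"
      using assms that balanced_powers_nonneg[OF that] by auto
    then show ?thesis using assms(1) by (simp add: add_pos_nonneg)
  qed
  show ?thesis
    unfolding balanced_rate_def P1_objective_def
    by (intro continuous_intros)
      (use assms in \<open>auto intro: continuous_on_subset[OF continuous_on_product_coordinates]
        dest: pos simp: less_imp_neq[symmetric]\<close>)
qed

lemma P1_feasible_balanced:
  assumes "sigma2 > 0" "ps \<in> balanced_powers N PS PR gsr grm"
    and "\<And>n. n < N \<Longrightarrow> gsr n > 0" "\<And>n. n < N \<Longrightarrow> grm n > 0" "\<And>n. n < N \<Longrightarrow> gre n < grm n"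
  shows "P1_feasible N sigma2 PS PR gsr grm gre ps (\<lambda>n. ps n * gsr n / grm n) (\<lambda>n. ps n * gsr n / sigma2)"
proof -
  have sums: "(\<Sum>n<N. ps n) \<le> PS" "(\<Sum>n<N. ps n * gsr n / grm n) \<le> PR"
    using assms(2) by (simp_all add: balanced_powers_def)
  have "0 < 1 + ps n * gsr n / sigma2 \<and> 0 \<le> ps n * gsr n / grm n
      \<and> ps n * gsr n / grm n * gre n \<le> ps n * gsr n" if n: "n < N" for n
  proof -
    have "ps n \<ge> 0" using balanced_powers_nonneg[OF assms(2) n] .
    moreover have "gsr n > 0" "grm n > 0" "gre n < grm n" using assms n by auto
    moreover have "gre n * ps n \<le> grm n * ps n" using calculation by (intro mult_right_mono) auto
    ultimately show ?thesis
      using assms(1) by (auto simp: field_simps intro!: add_pos_nonneg)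
  qed
  then show ?thesis
    unfolding P1_feasible_def using sums balanced_powers_nonneg[OF assms(2)] assms(4)
    by (auto simp: less_imp_neq[symmetric])
qed

lemma P1_objective_le_balanced_rate:
  assumes "P1_feasible N sigma2 PS PR gsr grm gre ps pr t" "sigma2 > 0"
    and "\<And>n. n < N \<Longrightarrow> gsr n > 0" "\<And>n. n < N \<Longrightarrow> grm n > 0" "\<And>n. n < N \<Longrightarrow> gre n > 0"
  obtains q where "q \<in> balanced_powers N PS PR gsr grm"
    and "P1_objective N sigma2 gre pr t \<le> balanced_rate N sigma2 gsr grm gre q"
proof
  define q where "q n = (if n < N then min (ps n) (pr n * grm n / gsr n) else 0)" for n
  have feas: "1 + t n > 0" "t n \<le> ps n * gsr n / sigma2" "t n \<le> pr n * grm n / sigma2"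
    "ps n \<ge> 0" "pr n \<ge> 0" if "n < N" for n
    using assms(1) that unfolding P1_feasible_def by auto
  have sums: "(\<Sum>n<N. ps n) \<le> PS" "(\<Sum>n<N. pr n) \<le> PR"
    using assms(1) unfolding P1_feasible_def by auto
  have q_bounds: "0 \<le> q n" "q n \<le> ps n" "q n * gsr n / grm n \<le> pr n"
    "t n \<le> q n * gsr n / sigma2" if n: "n < N" for n
  proof -
    have g: "gsr n > 0" "grm n > 0" using assms n by auto
    show "0 \<le> q n" "q n \<le> ps n" using feas[OF n] g n by (simp_all add: q_def)
    have "q n \<le> pr n * grm n / gsr n" using n by (simp add: q_def)
    then show "q n * gsr n / grm n \<le> pr n" using g by (simp add: field_simps)
    show "t n \<le> q n * gsr n / sigma2"
      using feas[OF n] g n by (simp add: q_def min_def field_simps)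
  qed
  have "(\<Sum>n<N. q n) \<le> PS"
    using sum_mono[of "{..<N}" q ps] q_bounds(2) sums(1) by fastforce
  moreover have "(\<Sum>n<N. q n * (gsr n / grm n)) \<le> PR"
    using sum_mono[of "{..<N}" "\<lambda>n. q n * (gsr n / grm n)" pr] q_bounds(3) sums(2) by fastforce
  moreover have "q n \<le> PS" if "n < N" for n
    using member_le_sum[of n "{..<N}" ps] feas(4) sums(1) q_bounds(2)[OF that] that by fastforce
  ultimately show "q \<in> balanced_powers N PS PR gsr grm"
    unfolding balanced_powers_def using q_bounds(1) by (auto simp: Pi_iff q_def)
  show "P1_objective N sigma2 gre pr t \<le> balanced_rate N sigma2 gsr grm gre q"
    unfolding balanced_rate_def P1_objective_def
  proof (intro sum_mono mult_left_mono log_mono)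
    fix n assume "n \<in> {..<N}"
    then have n: "n < N" by simp
    show "(1 + t n) / (1 + pr n * gre n / sigma2)
        \<le> (1 + q n * gsr n / sigma2) / (1 + q n * gsr n / grm n * gre n / sigma2)"
      using assms n feas[OF n] q_bounds[OF n] by (intro secrecy_ratio_le_balanced) auto
    have "gre n > 0" using assms n by simp
    then have "pr n * gre n / sigma2 \<ge> 0" using assms(2) feas(5)[OF n] by simp
    then show "0 < (1 + t n) / (1 + pr n * gre n / sigma2)"
      using feas[OF n] by (simp add: add_pos_nonneg)
  qed simp_all
qed

theorem theorem1:
  fixes N :: nat and sigma2 PS PR :: real
    and gsr grm gre :: "nat \<Rightarrow> real"
  assumes "N \<ge> 1" and "sigma2 > 0" and "PS > 0" and "PR > 0"
    and "\<And>n. n < N \<Longrightarrow> gsr n > 0"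
    and "\<And>n. n < N \<Longrightarrow> grm n > 0"
    and "\<And>n. n < N \<Longrightarrow> gre n > 0"
    and "\<And>n. n < N \<Longrightarrow> grm n > gre n"
  shows "\<exists>ps pr t.
           P1_feasible N sigma2 PS PR gsr grm gre ps pr t \<and>
           (\<forall>ps' pr' t'. P1_feasible N sigma2 PS PR gsr grm gre ps' pr' t' \<longrightarrow>
              P1_objective N sigma2 gre pr' t' \<le> P1_objective N sigma2 gre pr t) \<and>
           (\<forall>n<N. ps n * gsr n = pr n * grm n)"
proof -
  let ?K = "balanced_powers N PS PR gsr grm" and ?g = "balanced_rate N sigma2 gsr grm gre"
  have "(\<lambda>_. 0) \<in> ?K" using assms unfolding balanced_powers_def by auto
  moreover have "continuous_on ?K ?g"
    using assms by (intro continuous_on_balanced_rate) auto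
  ultimately have "\<exists>ps\<in>?K. \<forall>q\<in>?K. ?g q \<le> ?g ps"
    by (intro continuous_attains_sup compact_balanced_powers) auto
  then obtain ps where ps: "ps \<in> ?K" and ps_max: "\<And>q. q \<in> ?K \<Longrightarrow> ?g q \<le> ?g ps"
    by blast
  define pr where "pr n = ps n * gsr n / grm n" for n
  define t where "t n = ps n * gsr n / sigma2" for n
  have "P1_feasible N sigma2 PS PR gsr grm gre ps pr t"
    unfolding pr_def t_def using assms ps by (intro P1_feasible_balanced) auto
  moreover have "P1_objective N sigma2 gre pr' t' \<le> P1_objective N sigma2 gre pr t"
    if feasible: "P1_feasible N sigma2 PS PR gsr grm gre ps' pr' t'" for ps' pr' t'
  proof -
    obtain q where q: "q \<in> ?K" and dominated: "P1_objective N sigma2 gre pr' t' \<le> ?g q"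
      using P1_objective_le_balanced_rate[OF feasible] assms by blast
    note dominated
    also have "?g q \<le> ?g ps" using ps_max[OF q] .
    also have "?g ps = P1_objective N sigma2 gre pr t"
      unfolding balanced_rate_def pr_def t_def ..
    finally show ?thesis .
  qed
  moreover have "\<forall>n<N. ps n * gsr n = pr n * grm n"
    using assms(6) by (simp add: pr_def less_imp_neq[symmetric])
  ultimately show ?thesis by blast
qed

end
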